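(* Let $R$ be an associative ring with identity and involution $*$, let $a\in R^{\#}\cap R^{\dagger}$ and let $x\in PE(R)$. If $x=aa^{\dagger}xa^{\dagger}a$, then $a^{\dagger}axaa^{\dagger}\in PE(R)$.
   Context: An involution on $R$ is a map $x\mapsto x^*$ with $(x^* )^*=x$, $(x+y)^*=x^*+y^*$, $(xy)^*=y^*x^*$. An element $a$ is Moore–Penrose invertible if there is $b$ with $aba=a$, $bab=b$, $(ab)^*=ab$, $(ba)^*=ba$; such $b$ is unique, denoted $a^{\dagger}$ (the paper also writes $a^+$), and $R^{\dagger}$ is the set of such $a$. An element $a$ is group invertible if there is $b$ with $aba=a$, $bab=b$, $ab=ba$; such $b$ is unique, denoted $a^{\#}$, and $R^{\#}$ is the set of such $a$. $PE(R)=\{e\in R: e^2=e=e^*\}$ is the set of projections. *)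

theory Defs
  imports Main
begin

definition is_involution :: "('a::ring_1 \<Rightarrow> 'a) \<Rightarrow> bool" where
  "is_involution s \<longleftrightarrow> (\<forall>x. s (s x) = x) \<and> (\<forall>x y. s (x + y) = s x + s y)
      \<and> (\<forall>x y. s (x * y) = s y * s x)"

definition is_MP_inverse :: "('a::ring_1 \<Rightarrow> 'a) \<Rightarrow> 'a \<Rightarrow> 'a \<Rightarrow> bool" where
  "is_MP_inverse s a b \<longleftrightarrow> a * b * a = a \<and> b * a * b = b \<and> s (a * b) = a * b \<and> s (b * a) = b * a"

definition MP_invertible :: "('a::ring_1 \<Rightarrow> 'a) \<Rightarrow> 'a \<Rightarrow> bool" where
  "MP_invertible s a \<longleftrightarrow> (\<exists>b. is_MP_inverse s a b)"

text \<open>The Moore-Penrose inverse (unique when it exists).\<close>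
definition MP_inv :: "('a::ring_1 \<Rightarrow> 'a) \<Rightarrow> 'a \<Rightarrow> 'a" where
  "MP_inv s a = (THE b. is_MP_inverse s a b)"

definition is_group_inverse :: "'a::ring_1 \<Rightarrow> 'a \<Rightarrow> bool" where
  "is_group_inverse a b \<longleftrightarrow> a * b * a = a \<and> b * a * b = b \<and> a * b = b * a"

definition group_invertible :: "'a::ring_1 \<Rightarrow> bool" where
  "group_invertible a \<longleftrightarrow> (\<exists>b. is_group_inverse a b)"

definition PE :: "('a::ring_1 \<Rightarrow> 'a) \<Rightarrow> 'a set" where
  "PE s = {e. e * e = e \<and> e = s e}"

end

theory Submission
  imports Defs
begin

text \<open>Since \<open>x\<close> and the projections \<open>a a\<^sup>\<dagger>\<close>, \<open>a\<^sup>\<dagger> a\<close> are self-adjoint, applying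
  the involution to \<open>x = a a\<^sup>\<dagger> x a\<^sup>\<dagger> a\<close> gives \<open>x = a\<^sup>\<dagger> a x a a\<^sup>\<dagger>\<close>; so the element in
  question is \<open>x\<close> itself.\<close>

lemma involution_mult:
  assumes "is_involution s"
  shows "s (x * y) = s y * s x"
  using assms unfolding is_involution_def by blast

lemma is_MP_inverse_unique:
  assumes inv: "is_involution s" and b: "is_MP_inverse s a b" and c: "is_MP_inverse s a c"
  shows "b = c"
proof -
  have b1: "a*b*a = a" "b*a*b = b" "s (a*b) = a*b" "s (b*a) = b*a"
    using b unfolding is_MP_inverse_def by auto
  have c1: "a*c*a = a" "c*a*c = c" "s (a*c) = a*c" "s (c*a) = c*a"
    using c unfolding is_MP_inverse_def by auto
  have "a*b = s ((a*c)*(a*b))" using c1(1) b1(3) by (metis mult.assoc)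
  also have "\<dots> = (a*b)*(a*c)" using involution_mult[OF inv] b1(3) c1(3) by simp
  also have "\<dots> = a*c" using b1(1) by (metis mult.assoc)
  finally have ab: "a*b = a*c" .
  have "b*a = s ((b*a)*(c*a))" using c1(1) b1(4) by (metis mult.assoc)
  also have "\<dots> = (c*a)*(b*a)" using involution_mult[OF inv] b1(4) c1(4) by simp
  also have "\<dots> = c*a" using b1(1) by (metis mult.assoc)
  finally have ba: "b*a = c*a" .
  have "b = b*(a*b)" using b1(2) by (metis mult.assoc)
  also have "\<dots> = (b*a)*c" using ab by (metis mult.assoc)
  also have "\<dots> = c" using ba c1(2) by (metis mult.assoc)
  finally show ?thesis .
qed

lemma MP_inv_is_MP_inverse:
  assumes "is_involution s" and "MP_invertible s a"
  shows "is_MP_inverse s a (MP_inv s a)"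
  using assms is_MP_inverse_unique unfolding MP_invertible_def MP_inv_def
  by (metis theI)

lemma self_adjoint_sandwich_swap:
  assumes "is_involution s" and "s p = p" and "s q = q" and "s x = x"
    and "x = p * x * q"
  shows "q * x * p = x"
  using assms involution_mult[OF assms(1)] by (metis mult.assoc)

theorem lemma2p8:
  fixes s :: "'a::ring_1 \<Rightarrow> 'a" and a x :: 'a
  assumes "is_involution s"
    and "group_invertible a" and "MP_invertible s a"
    and "x \<in> PE s"
    and "x = a * MP_inv s a * x * MP_inv s a * a"
  shows "MP_inv s a * a * x * a * MP_inv s a \<in> PE s"
proof -
  define b where "b = MP_inv s a"
  have "is_MP_inverse s a b"
    unfolding b_def using MP_inv_is_MP_inverse[OF assms(1,3)] .
  then have "s (a * b) = a * b" and "s (b * a) = b * a"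
    unfolding is_MP_inverse_def by auto
  moreover have "s x = x" using assms(4) unfolding PE_def by simp
  moreover have "x = (a * b) * x * (b * a)"
    using assms(5) unfolding b_def by (simp add: mult.assoc)
  ultimately have "(b * a) * x * (a * b) = x"
    using self_adjoint_sandwich_swap[OF assms(1)] by blast
  then show ?thesis
    using assms(4) unfolding b_def by (simp add: mult.assoc)
qed

end
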